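(* Let $n>1$ be an integer. There is no matrix $M\in\mathcal S^{n\times n}$ such that simultaneously: (A1) $M$ is distinguished and self-conjugate; (A2) the first row of $M$ is $[1,2,2,\dots,2]$; (A3) $c_i(M)=1$ for all $1\le i\le n$; (A4) every principal submatrix of $M$ of odd degree has a column whose sum of entries equals $1$.
   Context: $\mathcal S=\{0,1,2,3\}$ is the Klein four-group ($\mathbb Z_2$-vector space) with $x+x=0$, $1+2=3$, $1+3=2$, $2+3=1$. Conjugation is the linear involution $\overline{\cdot}$ of $\mathcal S$ with $\bar0=0,\bar1=1,\bar2=3,\bar3=2$. A square matrix $M$ over $\mathcal S$ is self-conjugate if $M^t=\overline M$ (entrywise conjugate), and distinguished if it has $1$ on the diagonal and $2$ or $3$ everywhere off the diagonal. $c_i(M)$ is the sum of the entries of the $i$-th column. A principal submatrix is one given by the same set of row and column indices. *)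

theory Defs
  imports Main
begin

datatype S = S0 | S1 | S2 | S3

fun S_add :: "S \<Rightarrow> S \<Rightarrow> S" where
  "S_add S0 y = y"
| "S_add x S0 = x"
| "S_add S1 S1 = S0" | "S_add S2 S2 = S0" | "S_add S3 S3 = S0"
| "S_add S1 S2 = S3" | "S_add S2 S1 = S3"
| "S_add S1 S3 = S2" | "S_add S3 S1 = S2"
| "S_add S2 S3 = S1" | "S_add S3 S2 = S1"

instantiation S :: comm_monoid_add
begin
definition zero_S_def: "0 = S0"
definition plus_S_def: "x + y = S_add x y"
instance
proof
  fix a b c :: S
  show "a + b + c = a + (b + c)" unfolding plus_S_def
    by (cases a; cases b; cases c) auto
  show "a + b = b + a" unfolding plus_S_def
    by (cases a; cases b) auto
  show "0 + a = a" unfolding plus_S_def zero_S_def by simp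
qed
end

fun conj :: "S \<Rightarrow> S" where
  "conj S0 = S0" | "conj S1 = S1" | "conj S2 = S3" | "conj S3 = S2"

text \<open>n x n matrices over S, indices 0..n-1 (index 0 = paper's index 1).\<close>
type_synonym matS = "nat \<Rightarrow> nat \<Rightarrow> S"

definition self_conjugate :: "nat \<Rightarrow> matS \<Rightarrow> bool" where
  "self_conjugate n M \<longleftrightarrow> (\<forall>i<n. \<forall>j<n. M j i = conj (M i j))"

definition distinguished :: "nat \<Rightarrow> matS \<Rightarrow> bool" where
  "distinguished n M \<longleftrightarrow> (\<forall>i<n. M i i = S1) \<and>
     (\<forall>i<n. \<forall>j<n. i \<noteq> j \<longrightarrow> M i j = S2 \<or> M i j = S3)"

definition col_sum :: "nat set \<Rightarrow> matS \<Rightarrow> nat \<Rightarrow> S" where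
  "col_sum I M j = (\<Sum>i\<in>I. M i j)"

end

theory Submission
  imports Defs
begin

text \<open>Orient an edge from i to j whenever M i j = 3. Self-conjugacy and distinguishedness make
  this a tournament on the n indices. A principal 3x3 submatrix on a directed 3-cycle has all
  column sums 1 + 2 + 3 = 0, so the tournament is transitive, and a transitive tournament with at
  least two vertices has a vertex of in-degree one. But a column sum 1 = 1 + (sum of the
  off-diagonal 2s and 3s) forces an even number of 3s in every column, i.e. even in-degrees.\<close>

lemma S_plus_simps [simp]:
  "S0 + x = x" "x + S0 = x" "S1 + S1 = S0" "S2 + S2 = S0" "S3 + S3 = S0"
  "S1 + S2 = S3" "S2 + S1 = S3" "S1 + S3 = S2" "S3 + S1 = S2"
  "S2 + S3 = S1" "S3 + S2 = S1"
  unfolding plus_S_def by (cases x; simp)+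

lemma sum_S2_S3:
  assumes "finite F" "\<forall>x\<in>F. f x = S2 \<or> f x = S3"
  shows "sum f F =
    (if even (card F) then (if even (card {x\<in>F. f x = S3}) then S0 else S1)
     else (if even (card {x\<in>F. f x = S3}) then S2 else S3))"
  using assms
proof (induction F rule: finite_induct)
  case empty
  then show ?case by (simp add: zero_S_def)
next
  case (insert a F)
  show ?case
  proof (cases "f a = S3")
    case True
    then have "{x\<in>insert a F. f x = S3} = insert a {x\<in>F. f x = S3}" by auto
    then have "card {x\<in>insert a F. f x = S3} = Suc (card {x\<in>F. f x = S3})"
      using insert by simp
    then show ?thesis using insert True by auto
  next
    case False
    then have "f a = S2" using insert by auto
    moreover have "{x\<in>insert a F. f x = S3} = {x\<in>F. f x = S3}" using False by auto
    ultimately show ?thesis using insert by auto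
  qed
qed

lemma tournament_in_set_subset:
  assumes asym: "\<And>u v. u \<in> V \<Longrightarrow> v \<in> V \<Longrightarrow> R u v \<Longrightarrow> \<not> R v u"
    and total: "\<And>u v. u \<in> V \<Longrightarrow> v \<in> V \<Longrightarrow> u \<noteq> v \<Longrightarrow> R u v \<or> R v u"
    and no_cycle: "\<And>u v w. u \<in> V \<Longrightarrow> v \<in> V \<Longrightarrow> w \<in> V \<Longrightarrow> R u v \<Longrightarrow> R v w \<Longrightarrow> \<not> R w u"
    and "v \<in> V" "w \<in> V" "R w v"
  shows "{u\<in>V. R u w} \<subseteq> {u\<in>V. R u v} - {w}"
proof
  fix u assume u: "u \<in> {u\<in>V. R u w}"
  then have "u \<noteq> v" "u \<noteq> w" using asym \<open>R w v\<close> \<open>v \<in> V\<close> \<open>w \<in> V\<close> by blast+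
  then have "R u v" using total no_cycle u \<open>R w v\<close> \<open>v \<in> V\<close> \<open>w \<in> V\<close> by blast
  then show "u \<in> {u\<in>V. R u v} - {w}" using u \<open>u \<noteq> w\<close> by blast
qed

text \<open>A vertex whose in-set is nonempty of least size has exactly one in-neighbour: two of them
  would be comparable, and the in-set of the lower one would be a smaller nonempty in-set.\<close>

lemma transitive_tournament_in_degree_one:
  assumes "finite V" "x \<in> V" "y \<in> V" "x \<noteq> y"
    and asym: "\<And>u v. u \<in> V \<Longrightarrow> v \<in> V \<Longrightarrow> R u v \<Longrightarrow> \<not> R v u"
    and total: "\<And>u v. u \<in> V \<Longrightarrow> v \<in> V \<Longrightarrow> u \<noteq> v \<Longrightarrow> R u v \<or> R v u"
    and no_cycle: "\<And>u v w. u \<in> V \<Longrightarrow> v \<in> V \<Longrightarrow> w \<in> V \<Longrightarrow> R u v \<Longrightarrow> R v w \<Longrightarrow> \<not> R w u"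
  shows "\<exists>v\<in>V. card {u\<in>V. R u v} = 1"
proof -
  define inn where "inn v = {u\<in>V. R u v}" for v
  have fin: "finite (inn v)" for v unfolding inn_def using \<open>finite V\<close> by simp
  have shrink: "card (inn w) < card (inn v)" if "v \<in> V" "w \<in> V" "R w v" for v w
  proof -
    have "card (inn w) \<le> card (inn v - {w})"
      using tournament_in_set_subset[OF asym total no_cycle that] fin unfolding inn_def
      by (simp add: card_mono)
    also have "\<dots> < card (inn v)"
      using that by (intro card_Diff1_less fin) (simp add: inn_def)
    finally show ?thesis .
  qed
  have "\<exists>v. v \<in> V \<and> inn v \<noteq> {}"
    using total[OF \<open>x \<in> V\<close> \<open>y \<in> V\<close> \<open>x \<noteq> y\<close>] assms(2,3) unfolding inn_def by blast
  then obtain v where v: "v \<in> V" "inn v \<noteq> {}"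
    and least: "\<And>w. w \<in> V \<Longrightarrow> inn w \<noteq> {} \<Longrightarrow> card (inn v) \<le> card (inn w)"
    using ex_has_least_nat[of "\<lambda>v. v \<in> V \<and> inn v \<noteq> {}" _ "\<lambda>v. card (inn v)"] by blast
  have bottom: "inn w = {}" if "w \<in> inn v" for w
  proof (rule ccontr)
    assume "inn w \<noteq> {}"
    moreover have "w \<in> V" "R w v" using that unfolding inn_def by auto
    ultimately have "card (inn v) < card (inn v)" using least shrink[OF v(1)] by (meson leD leI)
    then show False by simp
  qed
  have "card (inn v) = 1"
  proof (rule ccontr)
    assume "card (inn v) \<noteq> 1"
    then have "inn v \<noteq> {w}" for w by auto
    moreover obtain w1 where "w1 \<in> inn v" using v(2) by blast
    ultimately obtain w2 where w: "w1 \<in> inn v" "w2 \<in> inn v" "w1 \<noteq> w2" by blast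
    then have "w1 \<in> inn w2 \<or> w2 \<in> inn w1" using total unfolding inn_def by blast
    then show False using bottom w by blast
  qed
  then show ?thesis using v(1) unfolding inn_def by blast
qed

lemma distinguished_self_conjugate_S3_iff:
  assumes "distinguished n M" "self_conjugate n M" "i < n" "j < n"
  shows "M i j = S3 \<longleftrightarrow> M j i = S2"
proof (cases "i = j")
  case True
  then show ?thesis using assms unfolding distinguished_def by simp
next
  case False
  then have "M i j = S2 \<or> M i j = S3" "M j i = conj (M i j)"
    using assms unfolding distinguished_def self_conjugate_def by blast+
  then show ?thesis by auto
qed

lemma even_S3_in_column_sum_S1:
  assumes "distinguished n M" "j < n" "col_sum {0..<n} M j = S1"
  shows "even (card {i\<in>{0..<n}. M i j = S3})"
proof -
  let ?F = "{0..<n} - {j}"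
  have "col_sum {0..<n} M j = M j j + sum (\<lambda>i. M i j) ?F"
    unfolding col_sum_def using \<open>j < n\<close> by (simp add: sum.remove)
  then have "sum (\<lambda>i. M i j) ?F = S0"
    using assms unfolding distinguished_def by (cases "sum (\<lambda>i. M i j) ?F") auto
  moreover have "\<forall>i\<in>?F. M i j = S2 \<or> M i j = S3"
    using assms unfolding distinguished_def by auto
  moreover have "{i\<in>?F. M i j = S3} = {i\<in>{0..<n}. M i j = S3}"
    using assms unfolding distinguished_def by auto
  ultimately show ?thesis using sum_S2_S3[of ?F "\<lambda>i. M i j"] by (auto split: if_splits)
qed

lemma no_S3_cycle:
  assumes "distinguished n M" "self_conjugate n M" "u < n" "v < n" "w < n"
    and odd_sub: "\<forall>I. I \<subseteq> {0..<n} \<and> odd (card I) \<longrightarrow> (\<exists>j\<in>I. col_sum I M j = S1)"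
    and cycle: "M u v = S3" "M v w = S3" "M w u = S3"
  shows False
proof -
  have diag: "M u u = S1" "M v v = S1" "M w w = S1"
    using assms unfolding distinguished_def by auto
  then have pairwise_distinct: "u \<noteq> v" "v \<noteq> w" "w \<noteq> u" using cycle by auto
  have reverse: "M v u = S2" "M w v = S2" "M u w = S2"
    using cycle distinguished_self_conjugate_S3_iff[OF assms(1,2)] assms(3-5) by blast+
  obtain j where "j \<in> {u, v, w}" "col_sum {u, v, w} M j = S1"
    using odd_sub[rule_format, of "{u, v, w}"] pairwise_distinct assms(3-5) by auto
  moreover have "col_sum {u, v, w} M u = S0" "col_sum {u, v, w} M v = S0"
    "col_sum {u, v, w} M w = S0"
    unfolding col_sum_def using pairwise_distinct diag cycle reverse by (simp_all add: add.commute)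
  ultimately show False by auto
qed

theorem mainTheorem4:
  fixes n :: nat
  assumes "n > 1"
  shows "\<not> (\<exists>M :: matS.
            distinguished n M \<and> self_conjugate n M
          \<and> M 0 0 = S1 \<and> (\<forall>j. 0 < j \<and> j < n \<longrightarrow> M 0 j = S2)
          \<and> (\<forall>j<n. col_sum {0..<n} M j = S1)
          \<and> (\<forall>I. I \<subseteq> {0..<n} \<and> odd (card I) \<longrightarrow>
                 (\<exists>j\<in>I. col_sum I M j = S1)))"
proof
  assume "\<exists>M :: matS.
            distinguished n M \<and> self_conjugate n M
          \<and> M 0 0 = S1 \<and> (\<forall>j. 0 < j \<and> j < n \<longrightarrow> M 0 j = S2)
          \<and> (\<forall>j<n. col_sum {0..<n} M j = S1)
          \<and> (\<forall>I. I \<subseteq> {0..<n} \<and> odd (card I) \<longrightarrow>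
                 (\<exists>j\<in>I. col_sum I M j = S1))"
  then obtain M :: matS where D: "distinguished n M" and SC: "self_conjugate n M"
    and cols: "\<forall>j<n. col_sum {0..<n} M j = S1"
    and odd_sub: "\<forall>I. I \<subseteq> {0..<n} \<and> odd (card I) \<longrightarrow> (\<exists>j\<in>I. col_sum I M j = S1)"
    by blast
  \<comment> \<open>The first-row condition is not needed: two indices already give a vertex of in-degree one.\<close>
  have "\<exists>v\<in>{0..<n}. card {u\<in>{0..<n}. M u v = S3} = 1"
  proof (rule transitive_tournament_in_degree_one[of _ 0 1])
    show "\<not> M v u = S3" if "u \<in> {0..<n}" "v \<in> {0..<n}" "M u v = S3" for u v
      using that distinguished_self_conjugate_S3_iff[OF D SC] by auto
    show "M u v = S3 \<or> M v u = S3" if "u \<in> {0..<n}" "v \<in> {0..<n}" "u \<noteq> v" for u v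
      using that D distinguished_self_conjugate_S3_iff[OF D SC] unfolding distinguished_def
      by (metis atLeastLessThan_iff)
    show "\<not> M w u = S3" if "u \<in> {0..<n}" "v \<in> {0..<n}" "w \<in> {0..<n}"
      "M u v = S3" "M v w = S3" for u v w
      using that no_S3_cycle[OF D SC _ _ _ odd_sub] by auto
  qed (use assms in auto)
  then show False using even_S3_in_column_sum_S1[OF D] cols by fastforce
qed

end
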